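(* Let $A=(A,d,\Delta)$ be a mixed complex. There is an inclusion $\mathsf{CC}^-(\mathrm{End}_A)\hookrightarrow\mathrm{End}_{\mathsf{CC}^-(A)}$ in $\mathcal Ops^{\mathsf{MxCpx}}$, given in arity $n$ by sending $f\otimes u^r$ to the $k[u]$-multilinear map $a_1u^{i_1}\otimes\cdots\otimes a_nu^{i_n}\mapsto f(a_1,\dots,a_n)u^{r+\sum_j i_j}$.
   Context: Cohomological grading, $|u|=2$. A mixed complex is $(V,d,\Delta)$ with $(V,d)$ a cochain complex and $\Delta$ of degree $-1$, $\Delta^2=0$, $d\Delta+\Delta d=0$. $\mathcal Ops^{\mathsf{MxCpx}}$ denotes operads in mixed complexes. For a mixed complex $A$, $\mathrm{End}_A$ denotes the endomorphism operad of $(A,d)$ regarded as an operad in mixed complexes with operator $\{\Delta,f\}=\Delta\circ_1f-(-1)^{|f|}\sum_i f\circ_i\Delta$. $\mathsf{CC}^-(A):=(A\otimes k[u],d+u\Delta)$, regarded as a mixed complex with the $u$-linear extension of $\Delta$, and $\mathrm{End}_{\mathsf{CC}^-(A)}$ is its endomorphism operad as an operad in mixed complexes in the same way. For an operad in mixed complexes $(\mathcal O,\partial,\Delta)$, $\mathsf{CC}^-(\mathcal O)(n)=(\mathcal O(n)\otimes k[u],\partial+\Delta u,\Delta)$ with compositions $(a u^r)\circ_i(bu^s)=(a\circ_ib)u^{r+s}$. *)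

theory Defs
  imports Complex_Main "HOL-Library.Function_Algebras" "HOL-Combinatorics.Permutations"
begin

section \<open>Graded vector spaces, modelled degreewise\<close>

text \<open>A cohomologically graded k-vector space is given by an ambient k-vector space
  (scalar multiplication sb) and a family Bc of subspaces, Bc e being the degree e
  component.  The graded space itself is the external direct sum of the Bc e;
  all structure maps take the degree of their argument explicitly.\<close>

definition sgnmul :: "int \<Rightarrow> 'b::ab_group_add \<Rightarrow> 'b" where
  "sgnmul k x = (if even k then x else - x)"

definition mixed_cx ::
  "('k::field \<Rightarrow> 'b::ab_group_add \<Rightarrow> 'b) \<Rightarrow> (int \<Rightarrow> 'b set)
     \<Rightarrow> (int \<Rightarrow> 'b \<Rightarrow> 'b) \<Rightarrow> (int \<Rightarrow> 'b \<Rightarrow> 'b) \<Rightarrow> bool" where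
  "mixed_cx sb Bc dB DB \<longleftrightarrow>
     vector_space sb \<and> (\<forall>e. module.subspace sb (Bc e)) \<and>
     (\<forall>e. \<forall>x\<in>Bc e. dB e x \<in> Bc (e + 1) \<and> DB e x \<in> Bc (e - 1) \<and>
        dB (e + 1) (dB e x) = 0 \<and> DB (e - 1) (DB e x) = 0 \<and>
        dB (e - 1) (DB e x) + DB (e + 1) (dB e x) = 0) \<and>
     (\<forall>e c. \<forall>x\<in>Bc e. \<forall>y\<in>Bc e.
        dB e (x + y) = dB e x + dB e y \<and> dB e (sb c x) = sb c (dB e x) \<and>
        DB e (x + y) = DB e x + DB e y \<and> DB e (sb c x) = sb c (DB e x))"

section \<open>Endomorphism operad\<close>

definition indom :: "(int \<Rightarrow> 'b set) \<Rightarrow> nat \<Rightarrow> int list \<Rightarrow> 'b list \<Rightarrow> bool" where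
  "indom Bc n es xs \<longleftrightarrow> length es = n \<and> length xs = n \<and> (\<forall>j<n. xs ! j \<in> Bc (es ! j))"

text \<open>EndS sb Bc n p: the degree p part of End(n) = Hom(B^{\<otimes> n}, B), i.e. families
  (indexed by the degrees es of the inputs) of k-multilinear maps
  B_{es_1} x ... x B_{es_n} \<rightarrow> B_{sum es + p}; extended by 0 off the domain.\<close>

definition EndS ::
  "('k::field \<Rightarrow> 'b::ab_group_add \<Rightarrow> 'b) \<Rightarrow> (int \<Rightarrow> 'b set) \<Rightarrow> nat \<Rightarrow> int
     \<Rightarrow> (int list \<Rightarrow> 'b list \<Rightarrow> 'b) set" where
  "EndS sb Bc n p = {F.
     (\<forall>es xs. indom Bc n es xs \<longrightarrow> F es xs \<in> Bc (sum_list es + p)) \<and>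
     (\<forall>es xs. \<not> indom Bc n es xs \<longrightarrow> F es xs = 0) \<and>
     (\<forall>es xs j x y c. indom Bc n es xs \<and> j < n \<and> x \<in> Bc (es ! j) \<and> y \<in> Bc (es ! j) \<longrightarrow>
        F es (xs[j := x + y]) = F es (xs[j := x]) + F es (xs[j := y]) \<and>
        F es (xs[j := sb c x]) = sb c (F es (xs[j := x])))}"

definition fscale ::
  "('k \<Rightarrow> 'b \<Rightarrow> 'b) \<Rightarrow> 'k \<Rightarrow> (int list \<Rightarrow> 'b list \<Rightarrow> 'b) \<Rightarrow> (int list \<Rightarrow> 'b list \<Rightarrow> 'b)" where
  "fscale sb c F = (\<lambda>es xs. sb c (F es xs))"

text \<open>Graded commutator [D, F] = D \<circ>_1 F - (-1)^{|F||D|} \<Sum>_j F \<circ>_j D for an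
  operator D of degree k, F of arity n and degree p (Koszul signs included).\<close>

definition ebracket ::
  "(int \<Rightarrow> 'b set) \<Rightarrow> (int \<Rightarrow> 'b \<Rightarrow> 'b::ab_group_add) \<Rightarrow> int \<Rightarrow> nat \<Rightarrow> int
     \<Rightarrow> (int list \<Rightarrow> 'b list \<Rightarrow> 'b) \<Rightarrow> (int list \<Rightarrow> 'b list \<Rightarrow> 'b)" where
  "ebracket Bc D k n p F = (\<lambda>es xs. if indom Bc n es xs then
      D (sum_list es + p) (F es xs)
      - sgnmul (p * k) (\<Sum>j<n. sgnmul (k * sum_list (take j es))
            (F (es[j := es ! j + k]) (xs[j := D (es ! j) (xs ! j)])))
     else 0)"

text \<open>Partial composition F \<circ>_j G (j is 0-based, j < n), F of arity n, G of arity m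
  and degree q.\<close>

definition compEnd ::
  "(int \<Rightarrow> 'b set) \<Rightarrow> nat \<Rightarrow> nat \<Rightarrow> int \<Rightarrow> nat
     \<Rightarrow> (int list \<Rightarrow> 'b list \<Rightarrow> 'b::ab_group_add) \<Rightarrow> (int list \<Rightarrow> 'b list \<Rightarrow> 'b)
     \<Rightarrow> (int list \<Rightarrow> 'b list \<Rightarrow> 'b)" where
  "compEnd Bc n m q j F G = (\<lambda>es xs. if indom Bc (n + m - 1) es xs then
      sgnmul (q * sum_list (take j es))
        (F (take j es @ [sum_list (take m (drop j es)) + q] @ drop (j + m) es)
           (take j xs @ [G (take m (drop j es)) (take m (drop j xs))] @ drop (j + m) xs))
     else 0)"

definition koszul :: "(nat \<Rightarrow> nat) \<Rightarrow> int list \<Rightarrow> nat \<Rightarrow> int" where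
  "koszul \<sigma> es n = (\<Sum>(i, j) \<in> {(i, j). i < j \<and> j < n \<and> \<sigma> j < \<sigma> i}. es ! \<sigma> i * es ! \<sigma> j)"

definition actEnd ::
  "(int \<Rightarrow> 'b set) \<Rightarrow> nat \<Rightarrow> (nat \<Rightarrow> nat) \<Rightarrow> (int list \<Rightarrow> 'b list \<Rightarrow> 'b::ab_group_add)
     \<Rightarrow> (int list \<Rightarrow> 'b list \<Rightarrow> 'b)" where
  "actEnd Bc n \<sigma> F = (\<lambda>es xs. if indom Bc n es xs then
      sgnmul (koszul \<sigma> es n) (F (map (\<lambda>i. es ! \<sigma> i) [0..<n]) (map (\<lambda>i. xs ! \<sigma> i) [0..<n]))
     else 0)"

definition unitEnd :: "(int \<Rightarrow> 'b set) \<Rightarrow> (int list \<Rightarrow> 'b list \<Rightarrow> 'b::ab_group_add)" where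
  "unitEnd Bc = (\<lambda>es xs. if indom Bc 1 es xs then xs ! 0 else 0)"

section \<open>Negative cyclic complex CC^-(A) = (A \<otimes> k[u], d + u\<Delta>), |u| = 2\<close>

text \<open>An element of degree e is c :: nat \<Rightarrow> 'a of finite support, standing for
  \<Sum>_i c(i) u^i with c(i) \<in> A_{e - 2i}.\<close>

definition CCc :: "(int \<Rightarrow> 'a::zero set) \<Rightarrow> int \<Rightarrow> (nat \<Rightarrow> 'a) set" where
  "CCc Ac e = {c. finite {i. c i \<noteq> 0} \<and> (\<forall>i. c i \<in> Ac (e - 2 * int i))}"

definition scc :: "('k \<Rightarrow> 'a \<Rightarrow> 'a) \<Rightarrow> 'k \<Rightarrow> (nat \<Rightarrow> 'a) \<Rightarrow> (nat \<Rightarrow> 'a)" where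
  "scc sc c x = (\<lambda>i. sc c (x i))"

definition dCC :: "(int \<Rightarrow> 'a \<Rightarrow> 'a) \<Rightarrow> (int \<Rightarrow> 'a \<Rightarrow> 'a) \<Rightarrow> int \<Rightarrow> (nat \<Rightarrow> 'a::ab_group_add)
     \<Rightarrow> (nat \<Rightarrow> 'a)" where
  "dCC d Dl e c = (\<lambda>i. d (e - 2 * int i) (c i)
      + (if i = 0 then 0 else Dl (e - 2 * int i + 2) (c (i - 1))))"

definition DCC :: "(int \<Rightarrow> 'a \<Rightarrow> 'a) \<Rightarrow> int \<Rightarrow> (nat \<Rightarrow> 'a) \<Rightarrow> (nat \<Rightarrow> 'a)" where
  "DCC Dl e c = (\<lambda>i. Dl (e - 2 * int i) (c i))"

section \<open>CC^-(End_A) = (End_A \<otimes> k[u], \<partial> + \<Delta>u, \<Delta>)\<close>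

text \<open>Degree q part of CC^-(End_A)(n): finitely supported \<phi> :: nat \<Rightarrow> End with
  \<phi> r \<in> End_A(n)^{q - 2r}, standing for \<Sum>_r \<phi>(r) u^r.\<close>

definition CCE ::
  "('k::field \<Rightarrow> 'a::ab_group_add \<Rightarrow> 'a) \<Rightarrow> (int \<Rightarrow> 'a set) \<Rightarrow> nat \<Rightarrow> int
     \<Rightarrow> (nat \<Rightarrow> int list \<Rightarrow> 'a list \<Rightarrow> 'a) set" where
  "CCE sc Ac n q = {\<phi>. finite {r. \<phi> r \<noteq> 0} \<and> (\<forall>r. \<phi> r \<in> EndS sc Ac n (q - 2 * int r))}"

definition dCCE ::
  "(int \<Rightarrow> 'a set) \<Rightarrow> (int \<Rightarrow> 'a \<Rightarrow> 'a::ab_group_add) \<Rightarrow> (int \<Rightarrow> 'a \<Rightarrow> 'a) \<Rightarrow> nat \<Rightarrow> int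
     \<Rightarrow> (nat \<Rightarrow> int list \<Rightarrow> 'a list \<Rightarrow> 'a) \<Rightarrow> (nat \<Rightarrow> int list \<Rightarrow> 'a list \<Rightarrow> 'a)" where
  "dCCE Ac d Dl n q \<phi> = (\<lambda>r. ebracket Ac d 1 n (q - 2 * int r) (\<phi> r)
      + (if r = 0 then 0 else ebracket Ac Dl (-1) n (q - 2 * int r + 2) (\<phi> (r - 1))))"

definition DCCE ::
  "(int \<Rightarrow> 'a set) \<Rightarrow> (int \<Rightarrow> 'a \<Rightarrow> 'a::ab_group_add) \<Rightarrow> nat \<Rightarrow> int
     \<Rightarrow> (nat \<Rightarrow> int list \<Rightarrow> 'a list \<Rightarrow> 'a) \<Rightarrow> (nat \<Rightarrow> int list \<Rightarrow> 'a list \<Rightarrow> 'a)" where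
  "DCCE Ac Dl n q \<phi> = (\<lambda>r. ebracket Ac Dl (-1) n (q - 2 * int r) (\<phi> r))"

text \<open>(a u^r) \<circ>_j (b u^s) = (a \<circ>_j b) u^{r+s}; \<psi> has total degree q'.\<close>

definition compCCE ::
  "(int \<Rightarrow> 'a set) \<Rightarrow> nat \<Rightarrow> nat \<Rightarrow> int \<Rightarrow> nat
     \<Rightarrow> (nat \<Rightarrow> int list \<Rightarrow> 'a list \<Rightarrow> 'a::ab_group_add) \<Rightarrow> (nat \<Rightarrow> int list \<Rightarrow> 'a list \<Rightarrow> 'a)
     \<Rightarrow> (nat \<Rightarrow> int list \<Rightarrow> 'a list \<Rightarrow> 'a)" where
  "compCCE Ac n m q' j \<phi> \<psi> = (\<lambda>r. \<Sum>s\<le>r.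
      compEnd Ac n m (q' - 2 * int (r - s)) j (\<phi> s) (\<psi> (r - s)))"

definition actCCE ::
  "(int \<Rightarrow> 'a set) \<Rightarrow> nat \<Rightarrow> (nat \<Rightarrow> nat) \<Rightarrow> (nat \<Rightarrow> int list \<Rightarrow> 'a list \<Rightarrow> 'a::ab_group_add)
     \<Rightarrow> (nat \<Rightarrow> int list \<Rightarrow> 'a list \<Rightarrow> 'a)" where
  "actCCE Ac n \<sigma> \<phi> = (\<lambda>r. actEnd Ac n \<sigma> (\<phi> r))"

definition unitCCE :: "(int \<Rightarrow> 'a set) \<Rightarrow> (nat \<Rightarrow> int list \<Rightarrow> 'a list \<Rightarrow> 'a::ab_group_add)" where
  "unitCCE Ac = (\<lambda>r. if r = 0 then unitEnd Ac else 0)"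

text \<open>Phi Ac n q \<phi>: the k[u]-multilinear map sending
  a_1 u^{i_1} \<otimes> ... \<otimes> a_n u^{i_n} to \<Sum>_r \<phi>(r)(a_1,...,a_n) u^{r + \<Sum> i_j}.\<close>

definition Phi ::
  "(int \<Rightarrow> 'a set) \<Rightarrow> nat \<Rightarrow> int \<Rightarrow> (nat \<Rightarrow> int list \<Rightarrow> 'a list \<Rightarrow> 'a::ab_group_add)
     \<Rightarrow> (int list \<Rightarrow> (nat \<Rightarrow> 'a) list \<Rightarrow> (nat \<Rightarrow> 'a))" where
  "Phi Ac n q \<phi> = (\<lambda>es cs. if indom (CCc Ac) n es cs then
      (\<lambda>N. \<Sum>(r, is) \<in> {(r, is). r \<le> N \<and> length is = n \<and> set is \<subseteq> {..N} \<and> r + sum_list is = N}.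
          \<phi> r (map2 (\<lambda>e i. e - 2 * int i) es is) (map2 (\<lambda>c i. c i) cs is))
     else 0)"

end

theory Submission
  imports Defs
begin

text \<open>The coefficient of u^N in Phi(\<phi>)(a_1 u^{i_1}, ..., a_n u^{i_n}) is a sum over the splittings
  N = r + i_1 + ... + i_n, so every identity reduces to an identity between such sums of values of the
  components \<phi> r.  Shifting the degrees of the inputs by even amounts does not change any Koszul
  sign; the summand u\<Delta> of the differential of CC^-(A) matches the summand \<Delta>u of the differential of
  CC^-(End_A) after shifting the exponent of u by one; and partial compositions correspond to a bijection
  between splittings of a composite exponent and pairs of nested splittings.  Injectivity follows by
  evaluating on inputs without positive powers of u, which returns the components \<phi> r themselves.\<close>

lemma sgnmul_cong: "even k = even k' \<Longrightarrow> sgnmul k x = sgnmul k' x"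
  by (simp add: sgnmul_def)

lemma sgnmul_add: "sgnmul k (x + y) = sgnmul k x + sgnmul k y"
  by (simp add: sgnmul_def)

lemma sgnmul_diff: "sgnmul k (x - y) = sgnmul k x - sgnmul k y"
  by (simp add: sgnmul_def)

lemma sgnmul_sum: "sgnmul k (sum f A) = (\<Sum>a\<in>A. sgnmul k (f a))"
  by (simp add: sgnmul_def sum_negf)

lemma sgnmul_uminus: "sgnmul (- k) x = sgnmul k x"
  by (simp add: sgnmul_def)

lemma sgnmul_apply: "sgnmul k f x = sgnmul k (f x)"
  by (simp add: sgnmul_def)

lemma sum_fun_apply: "sum F A x = (\<Sum>a\<in>A. F a x)"
  by (induction A rule: infinite_finite_induct) auto

lemma sum_reindex_neutral:
  assumes "finite T" "inj_on h S" "h ` S \<subseteq> T" "\<And>x. x \<in> T - h ` S \<Longrightarrow> g x = 0"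
  shows "sum g T = sum (\<lambda>x. g (h x)) S"
proof -
  have "sum g T = sum g (h ` S)"
    using assms by (intro sum.mono_neutral_right) auto
  also have "\<dots> = sum (\<lambda>x. g (h x)) S"
    using assms(2) by (simp add: sum.reindex)
  finally show ?thesis .
qed

section \<open>Multiplication by u and splittings of exponents of u\<close>

definition u_mult :: "(nat \<Rightarrow> 'b::zero) \<Rightarrow> nat \<Rightarrow> 'b" where
  "u_mult c = (\<lambda>N. if N = 0 then 0 else c (N - 1))"

lemma u_mult_0 [simp]: "u_mult c 0 = 0"
  by (simp add: u_mult_def)

lemma u_mult_Suc [simp]: "u_mult c (Suc N) = c N"
  by (simp add: u_mult_def)

lemma u_mult_diff: "u_mult (f - g) = u_mult f - (u_mult g :: nat \<Rightarrow> 'b::group_add)"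
  by (simp add: u_mult_def fun_eq_iff)

lemma u_mult_sgnmul: "u_mult (sgnmul k f) = sgnmul k (u_mult f :: nat \<Rightarrow> 'b::ab_group_add)"
  by (simp add: u_mult_def fun_eq_iff sgnmul_def)

lemma u_mult_sum: "u_mult (sum F A) = (\<Sum>a\<in>A. u_mult (F a) :: nat \<Rightarrow> 'b::comm_monoid_add)"
  by (auto simp: fun_eq_iff u_mult_def sum_fun_apply)

definition u_splits :: "nat \<Rightarrow> nat \<Rightarrow> (nat \<times> nat list) set" where
  "u_splits n N = {(r, ii). length ii = n \<and> r + sum_list ii = N}"

lemma u_splits_iff [simp]: "(r, ii) \<in> u_splits n N \<longleftrightarrow> length ii = n \<and> r + sum_list ii = N"
  by (simp add: u_splits_def)

lemma finite_u_splits: "finite (u_splits n N)"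
proof (rule finite_subset)
  show "u_splits n N \<subseteq> {..N} \<times> {ii. set ii \<subseteq> {..N} \<and> length ii = n}"
    using member_le_sum_list by fastforce
  show "finite ({..N} \<times> {ii. set ii \<subseteq> {..N} \<and> length ii = n})"
    by (intro finite_cartesian_product finite_lists_length_eq) auto
qed

lemma sum_u_splits_u_mult_fst:
  assumes "\<And>ii. g (0, ii) = 0"
  shows "sum g (u_splits n N) = u_mult (\<lambda>M. \<Sum>(r, ii)\<in>u_splits n M. g (Suc r, ii)) N"
proof (cases N)
  case 0
  then show ?thesis using assms by (auto intro: sum.neutral)
next
  case (Suc M)
  have "sum g (u_splits n N) = (\<Sum>x\<in>u_splits n M. g ((\<lambda>(r, ii). (Suc r, ii)) x))"
  proof (rule sum_reindex_neutral[OF finite_u_splits])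
    show "(\<lambda>(r, ii). (Suc r, ii)) ` u_splits n M \<subseteq> u_splits n N"
      using Suc by auto
    fix x assume x: "x \<in> u_splits n N - (\<lambda>(r, ii). (Suc r, ii)) ` u_splits n M"
    obtain r ii where [simp]: "x = (r, ii)" by fastforce
    have "r = 0"
    proof (rule ccontr)
      assume "r \<noteq> 0"
      then have "x = (\<lambda>(r, ii). (Suc r, ii)) (r - 1, ii)" "(r - 1, ii) \<in> u_splits n M"
        using x Suc by auto
      with x show False by blast
    qed
    then show "g x = 0" using assms by simp
  qed (auto simp: inj_on_def)
  then show ?thesis using Suc by (simp add: split_beta)
qed

lemma sum_u_splits_u_mult_nth:
  assumes j: "j < n" and vanish: "\<And>r ii. length ii = n \<Longrightarrow> ii ! j = 0 \<Longrightarrow> g (r, ii) = 0"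
  shows "sum g (u_splits n N) = u_mult (\<lambda>M. \<Sum>(r, ii)\<in>u_splits n M. g (r, ii[j := Suc (ii ! j)])) N"
proof (cases N)
  case 0
  have "g x = 0" if "x \<in> u_splits n 0" for x
  proof -
    obtain r ii where x: "x = (r, ii)" by fastforce
    have "ii ! j \<le> sum_list ii" using that x j by (intro member_le_sum_list) auto
    then have "ii ! j = 0" using that unfolding x u_splits_iff by linarith
    then show ?thesis using that x vanish by simp
  qed
  then show ?thesis using 0 by (simp add: sum.neutral)
next
  case (Suc M)
  let ?h = "\<lambda>(r, ii). (r, ii[j := Suc (ii ! j)])"
  have "sum g (u_splits n N) = (\<Sum>x\<in>u_splits n M. g (?h x))"
  proof (rule sum_reindex_neutral[OF finite_u_splits])
    show "inj_on ?h (u_splits n M)"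
      by (rule inj_on_inverseI[where g="\<lambda>(r, ii). (r, ii[j := ii ! j - 1])"]) (auto simp: j)
    show "?h ` u_splits n M \<subseteq> u_splits n N"
      using Suc j by (auto simp: sum_list_update)
    fix x assume x: "x \<in> u_splits n N - ?h ` u_splits n M"
    obtain r ii where xr: "x = (r, ii)" by fastforce
    have "ii ! j = 0"
    proof (rule ccontr)
      assume nz: "ii ! j \<noteq> 0"
      have "ii ! j \<le> sum_list ii" using x xr j by (intro member_le_sum_list) auto
      then have "(r, ii[j := ii ! j - 1]) \<in> u_splits n M" "?h (r, ii[j := ii ! j - 1]) = x"
        using x xr nz j Suc by (auto simp: sum_list_update)
      with x show False by blast
    qed
    then show "g x = 0" using x xr vanish by simp
  qed
  then show ?thesis using Suc by (simp add: split_beta)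
qed

lemma sum_list_permute_list:
  "\<sigma> permutes {..<length xs} \<Longrightarrow> sum_list (permute_list \<sigma> xs) = sum_list (xs :: 'b::comm_monoid_add list)"
  by (metis mset_permute_list sum_mset_sum_list)

lemma sum_u_splits_permute:
  assumes \<sigma>: "\<sigma> permutes {..<n}"
  shows "(\<Sum>(r, ii)\<in>u_splits n N. g r (permute_list \<sigma> ii)) = (\<Sum>(r, ii)\<in>u_splits n N. g r ii)"
proof (rule sum.reindex_bij_witness[where i="\<lambda>(r, ii). (r, permute_list (inv \<sigma>) ii)"
      and j="\<lambda>(r, ii). (r, permute_list \<sigma> ii)"])
  have inv: "inv \<sigma> permutes {..<n}" using \<sigma> by (rule permutes_inv)
  have inverse: "permute_list \<tau> (permute_list \<rho> ii) = ii"
    if "\<rho> permutes {..<n}" "\<tau> permutes {..<n}" "\<rho> \<circ> \<tau> = id" "length ii = n" for \<rho> \<tau> and ii :: "nat list"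
    using that permute_list_compose[of \<tau> ii \<rho>] by simp
  show "(\<lambda>(r, ii). (r, permute_list (inv \<sigma>) ii)) ((\<lambda>(r, ii). (r, permute_list \<sigma> ii)) a) = a"
    if "a \<in> u_splits n N" for a
    using that \<sigma> inv permutes_inv_o[OF \<sigma>] by (cases a) (auto intro: inverse)
  show "(\<lambda>(r, ii). (r, permute_list \<sigma> ii)) ((\<lambda>(r, ii). (r, permute_list (inv \<sigma>) ii)) b) = b"
    if "b \<in> u_splits n N" for b
    using that \<sigma> inv permutes_inv_o[OF \<sigma>] by (cases b) (auto intro: inverse)
  show "(\<lambda>(r, ii). (r, permute_list \<sigma> ii)) a \<in> u_splits n N"
    and "(\<lambda>(r, ii). (r, permute_list (inv \<sigma>) ii)) a \<in> u_splits n N" if "a \<in> u_splits n N" for a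
    using that \<sigma> inv by (auto simp: sum_list_permute_list split: prod.splits)
qed auto

lemma sum_list_take_drop3:
  "sum_list xs = sum_list (take j xs) + sum_list (take m (drop j xs)) + sum_list (drop (j + m) xs)"
  by (metis append_take_drop_id drop_drop add.commute add.assoc sum_list_append)

lemma sum_u_splits_splice:
  assumes j: "j < n"
  shows "(\<Sum>(r, ls)\<in>u_splits (n + m - 1) N. \<Sum>s\<le>r.
            g s (take j ls @ [r - s + sum_list (take m (drop j ls))] @ drop (j + m) ls) (r - s) (take m (drop j ls)))
       = (\<Sum>(s, ii)\<in>u_splits n N. \<Sum>(t, ks)\<in>u_splits m (ii ! j). g s ii t ks)"
proof -
  define split :: "(nat \<times> nat list) \<times> nat \<Rightarrow> (nat \<times> nat list) \<times> nat \<times> nat list"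
    where "split = (\<lambda>((r, ls), s).
    ((s, take j ls @ [r - s + sum_list (take m (drop j ls))] @ drop (j + m) ls), (r - s, take m (drop j ls))))"
  define merge :: "(nat \<times> nat list) \<times> nat \<times> nat list \<Rightarrow> (nat \<times> nat list) \<times> nat"
    where "merge = (\<lambda>((s, ii), (t, ks)). ((s + t, take j ii @ ks @ drop (j + 1) ii), s))"
  let ?S = "SIGMA a:u_splits (n + m - 1) N. {..fst a}"
  let ?T = "SIGMA a:u_splits n N. u_splits m (snd a ! j)"
  let ?g = "\<lambda>((s, ii), (t, ks)). g s ii t ks"
  have "(\<Sum>x\<in>?S. ?g (split x)) = sum ?g ?T"
  proof (rule sum.reindex_bij_witness[where i=merge and j=split])
    fix a assume "a \<in> ?S"
    then obtain r ls s where a: "a = ((r, ls), s)" "length ls = n + m - 1" "r + sum_list ls = N" "s \<le> r"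
      by auto
    have sum_ls: "sum_list ls = sum_list (take j ls) + sum_list (take m (drop j ls)) + sum_list (drop (j + m) ls)"
      by (rule sum_list_take_drop3)
    show "merge (split a) = a"
      using a j by (simp add: split_def merge_def) (metis append_take_drop_id drop_drop add.commute)
    show "split a \<in> ?T"
      using a j sum_ls by (simp add: split_def nth_append)
  next
    fix b assume "b \<in> ?T"
    then obtain s ii t ks where b: "b = ((s, ii), (t, ks))" "length ii = n" "s + sum_list ii = N"
        "length ks = m" "t + sum_list ks = ii ! j"
      by auto
    have ii: "ii = take j ii @ [ii ! j] @ drop (j + 1) ii"
      using b j id_take_nth_drop[of j ii] by simp
    then have "sum_list ii = sum_list (take j ii) + ii ! j + sum_list (drop (j + 1) ii)"
      by (metis add.assoc sum_list.Cons sum_list.Nil sum_list_append add_0_right append_Cons append_Nil)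
    then show "merge b \<in> ?S"
      using b j by (simp add: merge_def)
    show "split (merge b) = b"
      using b j ii by (simp add: split_def merge_def)
  qed (simp add: split_def split_beta)
  moreover have "(\<Sum>x\<in>?S. ?g (split x))
      = (\<Sum>(r, ls)\<in>u_splits (n + m - 1) N. \<Sum>s\<le>r.
            g s (take j ls @ [r - s + sum_list (take m (drop j ls))] @ drop (j + m) ls) (r - s) (take m (drop j ls)))"
    unfolding split_def split_beta by (subst sum.Sigma) (auto simp: finite_u_splits split_beta)
  moreover have "sum ?g ?T = (\<Sum>(s, ii)\<in>u_splits n N. \<Sum>(t, ks)\<in>u_splits m (ii ! j). g s ii t ks)"
    unfolding split_beta by (subst sum.Sigma) (auto simp: finite_u_splits split_beta)
  ultimately show ?thesis by simp
qed

section \<open>Shifted degrees and coefficients of inputs\<close>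

definition shift_degs :: "int list \<Rightarrow> nat list \<Rightarrow> int list" where
  "shift_degs es ii = map2 (\<lambda>e i. e - 2 * int i) es ii"

definition coeffs_at :: "(nat \<Rightarrow> 'a) list \<Rightarrow> nat list \<Rightarrow> 'a list" where
  "coeffs_at cs ii = map2 (\<lambda>c i. c i) cs ii"

lemma length_shift_degs [simp]: "length (shift_degs es ii) = min (length es) (length ii)"
  by (simp add: shift_degs_def)

lemma length_coeffs_at [simp]: "length (coeffs_at cs ii) = min (length cs) (length ii)"
  by (simp add: coeffs_at_def)

lemma nth_shift_degs:
  "k < length es \<Longrightarrow> k < length ii \<Longrightarrow> shift_degs es ii ! k = es ! k - 2 * int (ii ! k)"
  by (simp add: shift_degs_def)

lemma nth_coeffs_at: "k < length cs \<Longrightarrow> k < length ii \<Longrightarrow> coeffs_at cs ii ! k = (cs ! k) (ii ! k)"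
  by (simp add: coeffs_at_def)

lemma sum_list_shift_degs:
  "length es = length ii \<Longrightarrow> sum_list (shift_degs es ii) = sum_list es - 2 * int (sum_list ii)"
  unfolding shift_degs_def by (induction es ii rule: list_induct2) (auto simp: algebra_simps)

lemma shift_degs_update:
  "length es = length ii \<Longrightarrow> j < length es \<Longrightarrow>
   shift_degs (es[j := e]) ii = (shift_degs es ii)[j := e - 2 * int (ii ! j)]"
  by (rule nth_equalityI) (auto simp: nth_shift_degs nth_list_update)

lemma coeffs_at_update:
  "length cs = length ii \<Longrightarrow> j < length cs \<Longrightarrow>
   coeffs_at (cs[j := c]) ii = (coeffs_at cs ii)[j := c (ii ! j)]"
  by (rule nth_equalityI) (auto simp: nth_coeffs_at nth_list_update)

lemma take_shift_degs: "take j (shift_degs es ii) = shift_degs (take j es) (take j ii)"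
  by (simp add: shift_degs_def take_zip take_map)

lemma drop_shift_degs: "drop j (shift_degs es ii) = shift_degs (drop j es) (drop j ii)"
  by (simp add: shift_degs_def drop_zip drop_map)

lemma take_coeffs_at: "take j (coeffs_at cs ii) = coeffs_at (take j cs) (take j ii)"
  by (simp add: coeffs_at_def take_zip take_map)

lemma drop_coeffs_at: "drop j (coeffs_at cs ii) = coeffs_at (drop j cs) (drop j ii)"
  by (simp add: coeffs_at_def drop_zip drop_map)

lemma shift_degs_append:
  "length es = length ii \<Longrightarrow> shift_degs (es @ es') (ii @ ii') = shift_degs es ii @ shift_degs es' ii'"
  by (simp add: shift_degs_def)

lemma coeffs_at_append:
  "length cs = length ii \<Longrightarrow> coeffs_at (cs @ cs') (ii @ ii') = coeffs_at cs ii @ coeffs_at cs' ii'"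
  by (simp add: coeffs_at_def)

lemma shift_degs_Cons [simp]: "shift_degs (e # es) (i # ii) = (e - 2 * int i) # shift_degs es ii"
  by (simp add: shift_degs_def)

lemma coeffs_at_Cons [simp]: "coeffs_at (c # cs) (i # ii) = c i # coeffs_at cs ii"
  by (simp add: coeffs_at_def)

lemma shift_degs_Nil [simp]: "shift_degs [] ii = []"
  by (simp add: shift_degs_def)

lemma coeffs_at_Nil [simp]: "coeffs_at [] ii = []"
  by (simp add: coeffs_at_def)

lemma even_sum_list_take_shift_degs:
  "length es = length ii \<Longrightarrow> even (sum_list (take j (shift_degs es ii))) = even (sum_list (take j es))"
  by (simp add: take_shift_degs sum_list_shift_degs)

lemma permute_list_shift_degs:
  "\<sigma> permutes {..<length es} \<Longrightarrow> length ii = length es \<Longrightarrow>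
   permute_list \<sigma> (shift_degs es ii) = shift_degs (permute_list \<sigma> es) (permute_list \<sigma> ii)"
  by (simp add: shift_degs_def permute_list_map permute_list_zip)

lemma permute_list_coeffs_at:
  "\<sigma> permutes {..<length cs} \<Longrightarrow> length ii = length cs \<Longrightarrow>
   permute_list \<sigma> (coeffs_at cs ii) = coeffs_at (permute_list \<sigma> cs) (permute_list \<sigma> ii)"
  by (simp add: coeffs_at_def permute_list_map permute_list_zip)

lemma shift_degs_splice:
  assumes "length es = length ls" "j \<le> length es"
  shows "shift_degs (take j es @ e # drop k es) (take j ls @ i # drop k ls)
       = take j (shift_degs es ls) @ (e - 2 * int i) # drop k (shift_degs es ls)"
  using assms by (simp add: shift_degs_append take_shift_degs drop_shift_degs)

lemma coeffs_at_splice: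
  assumes "length cs = length ls" "j \<le> length cs"
  shows "coeffs_at (take j cs @ c # drop k cs) (take j ls @ i # drop k ls)
       = take j (coeffs_at cs ls) @ c i # drop k (coeffs_at cs ls)"
  using assms by (simp add: coeffs_at_append take_coeffs_at drop_coeffs_at)

lemma Phi_eq:
  assumes "indom (CCc Ac) n es cs"
  shows "Phi Ac n q \<phi> es cs N = (\<Sum>(r, ii)\<in>u_splits n N. \<phi> r (shift_degs es ii) (coeffs_at cs ii))"
proof -
  have "{(r, ii). r \<le> N \<and> length ii = n \<and> set ii \<subseteq> {..N} \<and> r + sum_list ii = N} = u_splits n N"
    using member_le_sum_list by fastforce
  then show ?thesis
    using assms by (simp add: Phi_def shift_degs_def coeffs_at_def)
qed

lemma Phi_outside: "\<not> indom (CCc Ac) n es cs \<Longrightarrow> Phi Ac n q \<phi> es cs = 0"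
  by (simp add: Phi_def)

lemma CCc_coeff: "c \<in> CCc Ac e \<Longrightarrow> c i \<in> Ac (e - 2 * int i)"
  by (simp add: CCc_def)

lemma CCc_finite_support: "c \<in> CCc Ac e \<Longrightarrow> finite {i. c i \<noteq> 0}"
  by (simp add: CCc_def)

lemma CCE_coeff: "\<phi> \<in> CCE sc Ac n q \<Longrightarrow> \<phi> r \<in> EndS sc Ac n (q - 2 * int r)"
  by (simp add: CCE_def)

lemma CCE_finite_support: "\<phi> \<in> CCE sc Ac n q \<Longrightarrow> finite {r. \<phi> r \<noteq> 0}"
  by (simp add: CCE_def)

lemma indom_update_input: "indom Bc n es xs \<Longrightarrow> j < n \<Longrightarrow> x \<in> Bc (es ! j) \<Longrightarrow> indom Bc n es (xs[j := x])"
  by (auto simp: indom_def nth_list_update)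

lemma indom_splice:
  assumes "indom Bc (n + m - 1) es xs" "j < n" "x \<in> Bc e"
  shows "indom Bc n (take j es @ [e] @ drop (j + m) es) (take j xs @ [x] @ drop (j + m) xs)"
  using assms unfolding indom_def by (auto simp: nth_append nth_Cons' min_def not_less add.commute)

lemma indom_shift_degs:
  "indom (CCc Ac) n es cs \<Longrightarrow> length ii = n \<Longrightarrow> indom Ac n (shift_degs es ii) (coeffs_at cs ii)"
  by (auto simp: indom_def nth_shift_degs nth_coeffs_at intro: CCc_coeff)

lemma ebracket_at_shift_degs:
  assumes cs: "indom (CCc Ac) n es cs" and ii: "length ii = n"
  shows "ebracket Ac D k n (q - 2 * int r) F (shift_degs es ii) (coeffs_at cs ii)
       = D (sum_list es + q - 2 * int (r + sum_list ii)) (F (shift_degs es ii) (coeffs_at cs ii))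
         - sgnmul (q * k) (\<Sum>j<n. sgnmul (k * sum_list (take j es))
              (F (shift_degs (es[j := es ! j + k]) ii) (coeffs_at (cs[j := DCC D (es ! j) (cs ! j)]) ii)))"
proof -
  have len: "length es = n" "length cs = n"
    using cs by (auto simp: indom_def)
  have sign: "sgnmul ((q - 2 * int r) * k) x = sgnmul (q * k) x" for x :: 'a
    by (rule sgnmul_cong) (simp add: algebra_simps)
  have summand: "sgnmul (k * sum_list (take j (shift_degs es ii)))
          (F ((shift_degs es ii)[j := shift_degs es ii ! j + k])
             ((coeffs_at cs ii)[j := D (shift_degs es ii ! j) (coeffs_at cs ii ! j)]))
      = sgnmul (k * sum_list (take j es))
          (F (shift_degs (es[j := es ! j + k]) ii) (coeffs_at (cs[j := DCC D (es ! j) (cs ! j)]) ii))"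
    if "j < n" for j
  proof -
    have "(shift_degs es ii)[j := shift_degs es ii ! j + k] = shift_degs (es[j := es ! j + k]) ii"
      "(coeffs_at cs ii)[j := D (shift_degs es ii ! j) (coeffs_at cs ii ! j)]
         = coeffs_at (cs[j := DCC D (es ! j) (cs ! j)]) ii"
      using that len ii
      by (simp_all add: shift_degs_update coeffs_at_update nth_shift_degs nth_coeffs_at DCC_def algebra_simps)
    moreover have "even (sum_list (take j (shift_degs es ii))) = even (sum_list (take j es))"
      using len ii by (simp add: even_sum_list_take_shift_degs)
    ultimately show ?thesis by (simp add: sgnmul_def)
  qed
  have deg: "sum_list (shift_degs es ii) + (q - 2 * int r) = sum_list es + q - 2 * int (r + sum_list ii)"
    using len ii by (simp add: sum_list_shift_degs algebra_simps)
  show ?thesis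
    unfolding ebracket_def if_P[OF indom_shift_degs[OF cs ii]] deg sign
    using summand by (intro arg_cong2[where f=minus] arg_cong[where f="sgnmul (q * k)"] refl sum.cong) auto
qed

lemma actEnd_eq:
  "indom Bc n es xs \<Longrightarrow>
   actEnd Bc n \<sigma> F es xs = sgnmul (koszul \<sigma> es n) (F (permute_list \<sigma> es) (permute_list \<sigma> xs))"
  by (simp add: actEnd_def permute_list_def indom_def)

lemma even_koszul_shift_degs:
  assumes \<sigma>: "\<sigma> permutes {..<n}" and len: "length es = n" "length ii = n"
  shows "even (koszul \<sigma> (shift_degs es ii) n) = even (koszul \<sigma> es n)"
proof -
  let ?S = "{(i, j). i < j \<and> j < n \<and> \<sigma> j < \<sigma> i}"
  have "koszul \<sigma> (shift_degs es ii) n - koszul \<sigma> es n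
      = (\<Sum>(i, j)\<in>?S. shift_degs es ii ! \<sigma> i * shift_degs es ii ! \<sigma> j - es ! \<sigma> i * es ! \<sigma> j)"
    unfolding koszul_def by (simp add: sum_subtractf split_beta)
  also have "2 dvd \<dots>"
  proof (rule dvd_sum, clarify)
    fix i j assume "i < j" "j < n" "\<sigma> j < \<sigma> i"
    then have "\<sigma> i < n" "\<sigma> j < n"
      using permutes_in_image[OF \<sigma>, of i] permutes_in_image[OF \<sigma>, of j] by auto
    then have "shift_degs es ii ! \<sigma> i * shift_degs es ii ! \<sigma> j - es ! \<sigma> i * es ! \<sigma> j
        = 2 * (2 * int (ii ! \<sigma> i) * int (ii ! \<sigma> j) - es ! \<sigma> i * int (ii ! \<sigma> j) - int (ii ! \<sigma> i) * es ! \<sigma> j)"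
      using len by (simp add: nth_shift_degs algebra_simps)
    then show "2 dvd (shift_degs es ii ! \<sigma> i * shift_degs es ii ! \<sigma> j - es ! \<sigma> i * es ! \<sigma> j)"
      by simp
  qed
  finally show ?thesis by (metis dvd_add_right_iff diff_add_cancel)
qed

lemma compEnd_at_shift_degs:
  fixes t :: nat
  assumes cs: "indom (CCc Ac) (n + m - 1) es cs" and ls: "length ls = n + m - 1" and j: "j < n"
  defines "ii \<equiv> take j ls @ [t + sum_list (take m (drop j ls))] @ drop (j + m) ls"
  shows "compEnd Ac n m (q' - 2 * int t) j F G (shift_degs es ls) (coeffs_at cs ls)
       = sgnmul (q' * sum_list (take j es))
           (F (shift_degs (take j es @ [sum_list (take m (drop j es)) + q'] @ drop (j + m) es) ii)
              ((coeffs_at (take j cs @ [X] @ drop (j + m) cs) ii)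
                 [j := G (shift_degs (take m (drop j es)) (take m (drop j ls)))
                         (coeffs_at (take m (drop j cs)) (take m (drop j ls)))]))"
proof -
  have len: "length es = n + m - 1" "length cs = n + m - 1"
    using cs by (auto simp: indom_def)
  have sign: "sgnmul ((q' - 2 * int t) * sum_list (take j (shift_degs es ls))) x
      = sgnmul (q' * sum_list (take j es)) x" for x :: 'a
    using even_sum_list_take_shift_degs[of es ls j] len ls by (intro sgnmul_cong) simp
  have degs: "take j (shift_degs es ls) @ [sum_list (take m (drop j (shift_degs es ls))) + (q' - 2 * int t)]
        @ drop (j + m) (shift_degs es ls)
      = shift_degs (take j es @ [sum_list (take m (drop j es)) + q'] @ drop (j + m) es) ii"
  proof -
    have "sum_list (take m (drop j (shift_degs es ls))) + (q' - 2 * int t)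
        = sum_list (take m (drop j es)) + q' - 2 * int (t + sum_list (take m (drop j ls)))"
      using len ls j by (simp add: take_shift_degs drop_shift_degs sum_list_shift_degs)
    then show ?thesis
      using len ls j by (simp add: ii_def shift_degs_splice)
  qed
  have coeffs: "take j (coeffs_at cs ls)
        @ [G (take m (drop j (shift_degs es ls))) (take m (drop j (coeffs_at cs ls)))]
        @ drop (j + m) (coeffs_at cs ls)
      = (coeffs_at (take j cs @ [X] @ drop (j + m) cs) ii)
          [j := G (shift_degs (take m (drop j es)) (take m (drop j ls)))
                  (coeffs_at (take m (drop j cs)) (take m (drop j ls)))]"
    using len ls j
    by (simp add: ii_def coeffs_at_splice list_update_append take_shift_degs drop_shift_degs
        take_coeffs_at drop_coeffs_at)
  show ?thesis
    unfolding compEnd_def if_P[OF indom_shift_degs[OF cs ls]] sign degs coeffs ..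
qed

section \<open>The comparison map for a mixed complex\<close>

definition additive_map_of_degree :: "(int \<Rightarrow> 'a set) \<Rightarrow> (int \<Rightarrow> 'a \<Rightarrow> 'a::ab_group_add) \<Rightarrow> int \<Rightarrow> bool" where
  "additive_map_of_degree Ac D k \<longleftrightarrow>
     (\<forall>e. \<forall>x\<in>Ac e. D e x \<in> Ac (e + k)) \<and> (\<forall>e. \<forall>x\<in>Ac e. \<forall>y\<in>Ac e. D e (x + y) = D e x + D e y)"

locale mixed_complex =
  fixes sc :: "'k::field \<Rightarrow> 'a::ab_group_add \<Rightarrow> 'a"
    and Ac :: "int \<Rightarrow> 'a set"
    and d Dl :: "int \<Rightarrow> 'a \<Rightarrow> 'a"
  assumes mixed_cx: "mixed_cx sc Ac d Dl"
begin

sublocale module sc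
  using mixed_cx by (simp add: mixed_cx_def module_iff_vector_space)

lemma subspace_component: "subspace (Ac e)"
  using mixed_cx by (simp add: mixed_cx_def)

lemma zero_in_component [simp]: "0 \<in> Ac e"
  using subspace_component subspace_0 by blast

lemma add_in_component: "x \<in> Ac e \<Longrightarrow> y \<in> Ac e \<Longrightarrow> x + y \<in> Ac e"
  using subspace_component subspace_add by blast

lemma scale_in_component: "x \<in> Ac e \<Longrightarrow> sc c x \<in> Ac e"
  using subspace_component subspace_scale by blast

lemma sum_in_component: "(\<And>x. x \<in> B \<Longrightarrow> f x \<in> Ac e) \<Longrightarrow> sum f B \<in> Ac e"
  using subspace_component subspace_sum by blast

lemma additive_map_of_degree_d: "additive_map_of_degree Ac d 1"
  using mixed_cx by (simp add: mixed_cx_def additive_map_of_degree_def)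

lemma additive_map_of_degree_Dl: "additive_map_of_degree Ac Dl (- 1)"
  using mixed_cx by (simp add: mixed_cx_def additive_map_of_degree_def)

lemma additive_map_zero: "additive_map_of_degree Ac D k \<Longrightarrow> D e 0 = 0"
proof -
  assume "additive_map_of_degree Ac D k"
  then have "D e (0 + 0) = D e 0 + D e 0"
    unfolding additive_map_of_degree_def using zero_in_component by blast
  then show ?thesis by simp
qed

lemma additive_map_sum:
  assumes "additive_map_of_degree Ac D k" "finite B" "\<And>x. x \<in> B \<Longrightarrow> f x \<in> Ac e"
  shows "D e (sum f B) = (\<Sum>x\<in>B. D e (f x))"
  using assms(2,3)
proof (induction B rule: finite_induct)
  case empty
  then show ?case using additive_map_zero[OF assms(1)] by simp
next
  case (insert a B)
  then show ?case using assms(1) by (simp add: additive_map_of_degree_def sum_in_component)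
qed

lemma DCC_in_CCc:
  assumes D: "additive_map_of_degree Ac D k" and c: "c \<in> CCc Ac e"
  shows "DCC D e c \<in> CCc Ac (e + k)"
proof -
  have "{i. DCC D e c i \<noteq> 0} \<subseteq> {i. c i \<noteq> 0}"
    by (auto simp: DCC_def additive_map_zero[OF D])
  moreover have "DCC D e c i \<in> Ac (e + k - 2 * int i)" for i
  proof -
    have "D (e - 2 * int i) (c i) \<in> Ac (e - 2 * int i + k)"
      using D CCc_coeff[OF c, of i] by (simp add: additive_map_of_degree_def)
    then show ?thesis by (simp add: DCC_def algebra_simps)
  qed
  ultimately show ?thesis
    using CCc_finite_support[OF c] by (auto simp: CCc_def intro: finite_subset)
qed

lemma CCc_add:
  assumes "x \<in> CCc Ac e" "y \<in> CCc Ac e"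
  shows "x + y \<in> CCc Ac e"
proof -
  have "{i. (x + y) i \<noteq> 0} \<subseteq> {i. x i \<noteq> 0} \<union> {i. y i \<noteq> 0}"
    by auto
  then show ?thesis
    using assms unfolding CCc_def by (auto intro: finite_subset add_in_component)
qed

lemma CCc_scale:
  assumes "x \<in> CCc Ac e"
  shows "scc sc c x \<in> CCc Ac e"
proof -
  have "{i. scc sc c x i \<noteq> 0} \<subseteq> {i. x i \<noteq> 0}"
    by (auto simp: scc_def)
  then show ?thesis
    using assms unfolding CCc_def by (auto intro: finite_subset scale_in_component simp: scc_def)
qed

lemma u_mult_CCc: "c \<in> CCc Ac e \<Longrightarrow> u_mult c \<in> CCc Ac (e + 2)"
proof -
  assume c: "c \<in> CCc Ac e"
  have "{i. u_mult c i \<noteq> 0} \<subseteq> Suc ` {i. c i \<noteq> 0}"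
  proof
    fix i assume "i \<in> {i. u_mult c i \<noteq> 0}"
    then show "i \<in> Suc ` {i. c i \<noteq> 0}" by (cases i) auto
  qed
  moreover have "u_mult c i \<in> Ac (e + 2 - 2 * int i)" for i
    using CCc_coeff[OF c, of "i - 1"] by (cases i) (simp_all add: algebra_simps)
  ultimately show ?thesis
    using CCc_finite_support[OF c] by (auto simp: CCc_def intro: finite_subset)
qed

lemma EndS_in: "F \<in> EndS sc Ac n p \<Longrightarrow> indom Ac n es xs \<Longrightarrow> F es xs \<in> Ac (sum_list es + p)"
  by (simp add: EndS_def)

lemma EndS_outside: "F \<in> EndS sc Ac n p \<Longrightarrow> \<not> indom Ac n es xs \<Longrightarrow> F es xs = 0"
  by (simp add: EndS_def)

lemma EndS_add:
  "F \<in> EndS sc Ac n p \<Longrightarrow> indom Ac n es xs \<Longrightarrow> j < n \<Longrightarrow> x \<in> Ac (es ! j) \<Longrightarrow> y \<in> Ac (es ! j) \<Longrightarrow>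
   F es (xs[j := x + y]) = F es (xs[j := x]) + F es (xs[j := y])"
  by (simp add: EndS_def)

lemma EndS_scale:
  "F \<in> EndS sc Ac n p \<Longrightarrow> indom Ac n es xs \<Longrightarrow> j < n \<Longrightarrow> x \<in> Ac (es ! j) \<Longrightarrow>
   F es (xs[j := sc c x]) = sc c (F es (xs[j := x]))"
  by (simp add: EndS_def)

lemma EndS_zero_input:
  assumes "F \<in> EndS sc Ac n p" "indom Ac n es xs" "j < n" "xs ! j = 0"
  shows "F es xs = 0"
proof -
  have "F es (xs[j := sc 0 0]) = sc 0 (F es (xs[j := 0]))"
    using assms by (intro EndS_scale) simp_all
  then show ?thesis using assms(4) by (metis list_update_id scale_zero_left)
qed

lemma EndS_sum:
  assumes F: "F \<in> EndS sc Ac n p" "indom Ac n es xs" "j < n"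
    and "finite K" "\<And>k. k \<in> K \<Longrightarrow> g k \<in> Ac (es ! j)"
  shows "F es (xs[j := sum g K]) = (\<Sum>k\<in>K. F es (xs[j := g k]))"
  using assms(4,5)
proof (induction K rule: finite_induct)
  case empty
  have "F es (xs[j := 0]) = 0"
    using F by (intro EndS_zero_input[OF F(1) indom_update_input]) (auto simp: indom_def)
  then show ?case by simp
next
  case (insert a K)
  then show ?case using F by (simp add: EndS_add sum_in_component)
qed

lemma Phi_term_in:
  assumes "\<phi> \<in> CCE sc Ac n q" "indom (CCc Ac) n es cs" "(r, ii) \<in> u_splits n N"
  shows "\<phi> r (shift_degs es ii) (coeffs_at cs ii) \<in> Ac (sum_list es + q - 2 * int N)"
proof -
  have len: "length ii = n" "length es = n" and N: "N = r + sum_list ii"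
    using assms(2,3) by (auto simp: indom_def)
  have "\<phi> r (shift_degs es ii) (coeffs_at cs ii) \<in> Ac (sum_list (shift_degs es ii) + (q - 2 * int r))"
    using assms len by (intro EndS_in[OF CCE_coeff] indom_shift_degs)
  then show ?thesis using len by (simp add: N sum_list_shift_degs algebra_simps)
qed

lemma Phi_coeff_in:
  "\<phi> \<in> CCE sc Ac n q \<Longrightarrow> indom (CCc Ac) n es cs \<Longrightarrow>
   Phi Ac n q \<phi> es cs N \<in> Ac (sum_list es + q - 2 * int N)"
  by (auto simp: Phi_eq intro!: sum_in_component Phi_term_in)

lemma Phi_finite_support:
  assumes \<phi>: "\<phi> \<in> CCE sc Ac n q" and cs: "indom (CCc Ac) n es cs"
  shows "finite {N. Phi Ac n q \<phi> es cs N \<noteq> 0}"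
proof -
  define R where "R = {r. \<phi> r \<noteq> 0}"
  define I where "I = (\<Union>j<n. {i. (cs ! j) i \<noteq> 0})"
  have "finite R" using CCE_finite_support[OF \<phi>] by (simp add: R_def)
  moreover have "finite I"
    using cs by (auto simp: I_def indom_def intro: CCc_finite_support)
  ultimately have fin: "finite ((\<lambda>(r, ii). r + sum_list ii) ` (R \<times> {ii. set ii \<subseteq> I \<and> length ii = n}))"
    by (intro finite_imageI finite_cartesian_product finite_lists_length_eq)
  have "\<phi> r (shift_degs es ii) (coeffs_at cs ii) = 0"
    if len: "length ii = n" and out: "(r, ii) \<notin> R \<times> {ii. set ii \<subseteq> I \<and> length ii = n}" for r ii
  proof (cases "r \<in> R")
    case False
    then show ?thesis by (simp add: R_def)
  next
    case True
    then have "\<not> set ii \<subseteq> I" using len out by auto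
    then obtain j where j: "j < n" "ii ! j \<notin> I"
      using len by (auto simp: subset_iff in_set_conv_nth)
    then have "coeffs_at cs ii ! j = 0"
      using cs that by (auto simp: I_def indom_def nth_coeffs_at)
    then show ?thesis
      using cs that j by (intro EndS_zero_input[OF CCE_coeff[OF \<phi>] indom_shift_degs]) auto
  qed
  then have "Phi Ac n q \<phi> es cs N = 0"
    if "N \<notin> (\<lambda>(r, ii). r + sum_list ii) ` (R \<times> {ii. set ii \<subseteq> I \<and> length ii = n})" for N
    using that cs by (force simp: Phi_eq intro!: sum.neutral)
  then show ?thesis
    by (blast intro: finite_subset[OF _ fin])
qed

lemma Phi_add_input:
  assumes \<phi>: "\<phi> \<in> CCE sc Ac n q" and cs: "indom (CCc Ac) n es cs" and j: "j < n"
    and x: "x \<in> CCc Ac (es ! j)" and y: "y \<in> CCc Ac (es ! j)"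
  shows "Phi Ac n q \<phi> es (cs[j := x + y]) = Phi Ac n q \<phi> es (cs[j := x]) + Phi Ac n q \<phi> es (cs[j := y])"
proof
  fix N
  have "\<phi> r (shift_degs es ii) (coeffs_at (cs[j := x + y]) ii)
      = \<phi> r (shift_degs es ii) (coeffs_at (cs[j := x]) ii) + \<phi> r (shift_degs es ii) (coeffs_at (cs[j := y]) ii)"
    if "length ii = n" for r ii
    using that cs j CCc_coeff[OF x] CCc_coeff[OF y]
    by (auto simp: indom_def coeffs_at_update nth_shift_degs
        intro!: EndS_add[OF CCE_coeff[OF \<phi>] indom_shift_degs[OF cs]])
  then show "Phi Ac n q \<phi> es (cs[j := x + y]) N
      = (Phi Ac n q \<phi> es (cs[j := x]) + Phi Ac n q \<phi> es (cs[j := y])) N"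
    using cs j x y
    by (auto simp: Phi_eq indom_update_input CCc_add sum.distrib[symmetric] intro!: sum.cong)
qed

lemma Phi_scale_input:
  assumes \<phi>: "\<phi> \<in> CCE sc Ac n q" and cs: "indom (CCc Ac) n es cs" and j: "j < n"
    and x: "x \<in> CCc Ac (es ! j)"
  shows "Phi Ac n q \<phi> es (cs[j := scc sc c x]) = scc sc c (Phi Ac n q \<phi> es (cs[j := x]))"
proof
  fix N
  have "\<phi> r (shift_degs es ii) (coeffs_at (cs[j := scc sc c x]) ii)
      = sc c (\<phi> r (shift_degs es ii) (coeffs_at (cs[j := x]) ii))"
    if "length ii = n" for r ii
    using that cs j CCc_coeff[OF x]
    by (auto simp: indom_def coeffs_at_update nth_shift_degs scc_def
        intro!: EndS_scale[OF CCE_coeff[OF \<phi>] indom_shift_degs[OF cs]])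
  moreover have "indom (CCc Ac) n es (cs[j := scc sc c x])" "indom (CCc Ac) n es (cs[j := x])"
    using cs j x by (auto intro: indom_update_input CCc_scale)
  ultimately show "Phi Ac n q \<phi> es (cs[j := scc sc c x]) N = scc sc c (Phi Ac n q \<phi> es (cs[j := x])) N"
    by (auto simp: Phi_eq scale_sum_right simp del: scc_def intro!: sum.cong)
      (auto simp: scc_def Phi_eq scale_sum_right intro!: sum.cong)
qed

lemma Phi_EndS: "\<phi> \<in> CCE sc Ac n q \<Longrightarrow> Phi Ac n q \<phi> \<in> EndS (scc sc) (CCc Ac) n q"
  unfolding EndS_def
  by (auto simp: CCc_def Phi_coeff_in Phi_finite_support Phi_outside Phi_add_input Phi_scale_input)

lemma Phi_add: "Phi Ac n q (\<phi> + \<psi>) = Phi Ac n q \<phi> + Phi Ac n q \<psi>"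
  by (intro ext, rename_tac es cs N, case_tac "indom (CCc Ac) n es cs")
    (simp_all add: Phi_eq Phi_outside split_beta sum.distrib)

lemma Phi_fscale: "Phi Ac n q (\<lambda>r. fscale sc c (\<phi> r)) = fscale (scc sc) c (Phi Ac n q \<phi>)"
  by (intro ext, rename_tac es cs N, case_tac "indom (CCc Ac) n es cs")
    (simp_all add: Phi_eq Phi_outside split_beta fscale_def scc_def scale_sum_right)

lemma Phi_constant_inputs:
  assumes \<phi>: "\<phi> \<in> CCE sc Ac n q" and xs: "indom Ac n es xs"
  defines "cs \<equiv> map (\<lambda>k i. if i = 0 then xs ! k else 0) [0..<n]"
  shows "Phi Ac n q \<phi> es cs r = \<phi> r es xs"
proof -
  have len: "length es = n" "length xs = n"
    using xs by (auto simp: indom_def)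
  have cs_in: "indom (CCc Ac) n es cs"
    using xs len unfolding cs_def by (auto simp: indom_def CCc_def intro: finite_subset[of _ "{0}"])
  have vanish: "\<phi> s (shift_degs es ii) (coeffs_at cs ii) = 0"
    if ii: "(s, ii) \<in> u_splits n r" "(s, ii) \<noteq> (r, replicate n 0)" for s ii
  proof -
    have "\<exists>k<n. ii ! k \<noteq> 0"
    proof (rule ccontr)
      assume "\<not> (\<exists>k<n. ii ! k \<noteq> 0)"
      then have "ii = replicate n 0" using ii by (auto intro: nth_equalityI)
      then show False using ii by (simp add: sum_list_replicate)
    qed
    then obtain k where "k < n" "ii ! k \<noteq> 0"
      by auto
    then show ?thesis
      using cs_in ii by (intro EndS_zero_input[OF CCE_coeff[OF \<phi>] indom_shift_degs])
        (auto simp: nth_coeffs_at cs_def)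
  qed
  have "Phi Ac n q \<phi> es cs r = (\<Sum>(s, ii)\<in>{(r, replicate n 0)}. \<phi> s (shift_degs es ii) (coeffs_at cs ii))"
    unfolding Phi_eq[OF cs_in]
  proof (rule sum.mono_neutral_right[OF finite_u_splits])
    show "{(r, replicate n 0)} \<subseteq> u_splits n r" by (simp add: sum_list_replicate)
    show "\<forall>p\<in>u_splits n r - {(r, replicate n 0)}.
        (\<lambda>(s, ii). \<phi> s (shift_degs es ii) (coeffs_at cs ii)) p = 0"
      using vanish by (clarsimp simp del: u_splits_iff) blast
  qed
  moreover have "shift_degs es (replicate n 0) = es" "coeffs_at cs (replicate n 0) = xs"
    using len by (auto intro!: nth_equalityI simp: nth_shift_degs nth_coeffs_at cs_def)
  ultimately show ?thesis by simp
qed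

lemma Phi_inj_on: "inj_on (Phi Ac n q) (CCE sc Ac n q)"
proof (rule inj_onI, intro ext)
  fix \<phi> \<psi> r es xs
  assume \<phi>: "\<phi> \<in> CCE sc Ac n q" and \<psi>: "\<psi> \<in> CCE sc Ac n q" and eq: "Phi Ac n q \<phi> = Phi Ac n q \<psi>"
  show "\<phi> r es xs = \<psi> r es xs"
  proof (cases "indom Ac n es xs")
    case True
    then show ?thesis using Phi_constant_inputs[OF \<phi> True] Phi_constant_inputs[OF \<psi> True] eq by metis
  next
    case False
    then show ?thesis using \<phi> \<psi> EndS_outside CCE_coeff by metis
  qed
qed

lemma Phi_unit: "Phi Ac 1 0 (unitCCE Ac) = unitEnd (CCc Ac)"
proof (intro ext)
  fix es cs N
  show "Phi Ac 1 0 (unitCCE Ac) es cs N = unitEnd (CCc Ac) es cs N"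
  proof (cases "indom (CCc Ac) 1 es cs")
    case False
    then show ?thesis by (simp add: Phi_outside unitEnd_def)
  next
    case True
    have "Phi Ac 1 0 (unitCCE Ac) es cs N
        = (\<Sum>(r, ii)\<in>{(0, [N])}. unitCCE Ac r (shift_degs es ii) (coeffs_at cs ii))"
      unfolding Phi_eq[OF True]
      by (intro sum.mono_neutral_right finite_u_splits) (auto simp: unitCCE_def length_Suc_conv split: if_splits)
    also have "\<dots> = (cs ! 0) N"
      using True by (auto simp: unitCCE_def unitEnd_def indom_def length_Suc_conv CCc_coeff)
    finally show ?thesis using True by (simp add: unitEnd_def)
  qed
qed

lemma Phi_ebracket:
  assumes \<phi>: "\<phi> \<in> CCE sc Ac n q" and D: "additive_map_of_degree Ac D k"
  shows "Phi Ac n q' (\<lambda>r. ebracket Ac D k n (q - 2 * int r) (\<phi> r))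
       = ebracket (CCc Ac) (DCC D) k n q (Phi Ac n q \<phi>)"
proof (intro ext)
  fix es cs N
  show "Phi Ac n q' (\<lambda>r. ebracket Ac D k n (q - 2 * int r) (\<phi> r)) es cs N
      = ebracket (CCc Ac) (DCC D) k n q (Phi Ac n q \<phi>) es cs N"
  proof (cases "indom (CCc Ac) n es cs")
    case False
    then show ?thesis by (simp add: Phi_outside ebracket_def)
  next
    case cs: True
    let ?E = "sum_list es + q - 2 * int N"
    let ?es = "\<lambda>j. es[j := es ! j + k]" and ?cs = "\<lambda>j. cs[j := DCC D (es ! j) (cs ! j)]"
    let ?t = "\<lambda>(r, ii). \<phi> r (shift_degs es ii) (coeffs_at cs ii)"
    let ?tj = "\<lambda>j (r, ii). \<phi> r (shift_degs (?es j) ii) (coeffs_at (?cs j) ii)"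
    have cs_j: "indom (CCc Ac) n (?es j) (?cs j)" if "j < n" for j
      using cs that DCC_in_CCc[OF D] by (auto simp: indom_def nth_list_update)
    have "Phi Ac n q' (\<lambda>r. ebracket Ac D k n (q - 2 * int r) (\<phi> r)) es cs N
        = (\<Sum>p\<in>u_splits n N. D ?E (?t p) - sgnmul (q * k) (\<Sum>j<n. sgnmul (k * sum_list (take j es)) (?tj j p)))"
      unfolding Phi_eq[OF cs] by (intro sum.cong) (auto simp: ebracket_at_shift_degs[OF cs])
    also have "\<dots> = D ?E (sum ?t (u_splits n N))
        - sgnmul (q * k) (\<Sum>j<n. sgnmul (k * sum_list (take j es)) (sum (?tj j) (u_splits n N)))"
    proof -
      have "D ?E (sum ?t (u_splits n N)) = (\<Sum>p\<in>u_splits n N. D ?E (?t p))"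
        using Phi_term_in[OF \<phi> cs] by (intro additive_map_sum[OF D finite_u_splits]) auto
      then show ?thesis
        by (simp add: sum_subtractf sgnmul_sum sum.swap[of _ "u_splits n N"])
    qed
    also have "\<dots> = ebracket (CCc Ac) (DCC D) k n q (Phi Ac n q \<phi>) es cs N"
      using cs cs_j by (simp add: ebracket_def Phi_eq DCC_def sum_fun_apply sgnmul_apply split_beta)
    finally show ?thesis .
  qed
qed

lemma Phi_DCCE:
  "\<phi> \<in> CCE sc Ac n q \<Longrightarrow>
   Phi Ac n (q - 1) (DCCE Ac Dl n q \<phi>) = ebracket (CCc Ac) (DCC Dl) (- 1) n q (Phi Ac n q \<phi>)"
  unfolding DCCE_def by (rule Phi_ebracket[OF _ additive_map_of_degree_Dl])

lemma Phi_u_mult_components: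
  "Phi Ac n q' (\<lambda>r. if r = 0 then 0 else \<chi> (r - 1)) es cs = u_mult (Phi Ac n q \<chi> es cs)"
  by (cases "indom (CCc Ac) n es cs")
    (auto simp: Phi_outside Phi_eq sum_u_splits_u_mult_fst[where n=n] u_mult_def fun_eq_iff)

lemma Phi_u_mult_input:
  assumes \<phi>: "\<phi> \<in> CCE sc Ac n q" and cs: "indom (CCc Ac) n es cs" and j: "j < n"
    and c: "c \<in> CCc Ac e"
  shows "Phi Ac n q \<phi> (es[j := e + 2]) (cs[j := u_mult c]) = u_mult (Phi Ac n q \<phi> (es[j := e]) (cs[j := c]))"
proof
  fix N
  have len: "length es = n" "length cs = n"
    using cs by (auto simp: indom_def)
  have cs2: "indom (CCc Ac) n (es[j := e + 2]) (cs[j := u_mult c])"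
    and cs0: "indom (CCc Ac) n (es[j := e]) (cs[j := c])"
    using cs j c u_mult_CCc[OF c] by (auto simp: indom_def nth_list_update)
  have "\<phi> r (shift_degs (es[j := e + 2]) ii) (coeffs_at (cs[j := u_mult c]) ii) = 0"
    if "length ii = n" "ii ! j = 0" for r ii
    using that len j
    by (intro EndS_zero_input[OF CCE_coeff[OF \<phi>] indom_shift_degs[OF cs2]]) (auto simp: nth_coeffs_at)
  moreover have "shift_degs (es[j := e + 2]) (ii[j := Suc (ii ! j)]) = shift_degs (es[j := e]) ii"
    "coeffs_at (cs[j := u_mult c]) (ii[j := Suc (ii ! j)]) = coeffs_at (cs[j := c]) ii"
    if "length ii = n" for ii
    using that len j by (auto intro!: nth_equalityI simp: nth_shift_degs nth_coeffs_at nth_list_update)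
  ultimately show "Phi Ac n q \<phi> (es[j := e + 2]) (cs[j := u_mult c]) N
      = u_mult (Phi Ac n q \<phi> (es[j := e]) (cs[j := c])) N"
    unfolding Phi_eq[OF cs2] Phi_eq[OF cs0]
    by (subst sum_u_splits_u_mult_nth[OF j]) (auto simp: split_beta u_mult_def intro!: sum.cong)
qed

lemma dCC_eq: "dCC d Dl e c = DCC d e c + u_mult (DCC Dl e c)"
  by (rule ext, rename_tac i, case_tac i) (simp_all add: dCC_def DCC_def algebra_simps)

lemma Phi_dCC_input:
  assumes \<phi>: "\<phi> \<in> CCE sc Ac n q" and cs: "indom (CCc Ac) n es cs" and j: "j < n"
  shows "Phi Ac n q \<phi> (es[j := es ! j + 1]) (cs[j := dCC d Dl (es ! j) (cs ! j)])
       = Phi Ac n q \<phi> (es[j := es ! j + 1]) (cs[j := DCC d (es ! j) (cs ! j)])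
         + u_mult (Phi Ac n q \<phi> (es[j := es ! j - 1]) (cs[j := DCC Dl (es ! j) (cs ! j)]))"
proof -
  have c: "cs ! j \<in> CCc Ac (es ! j)"
    using cs j by (simp add: indom_def)
  have dc: "DCC d (es ! j) (cs ! j) \<in> CCc Ac (es ! j + 1)"
    using DCC_in_CCc[OF additive_map_of_degree_d c] .
  have Dc: "u_mult (DCC Dl (es ! j) (cs ! j)) \<in> CCc Ac (es ! j + 1)"
    using u_mult_CCc[OF DCC_in_CCc[OF additive_map_of_degree_Dl c]] by (simp add: add.commute)
  have cs': "indom (CCc Ac) n (es[j := es ! j + 1]) (cs[j := DCC d (es ! j) (cs ! j)])"
    using cs j dc by (auto simp: indom_def nth_list_update)
  have "Phi Ac n q \<phi> (es[j := es ! j + 1]) (cs[j := dCC d Dl (es ! j) (cs ! j)])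
      = Phi Ac n q \<phi> (es[j := es ! j + 1]) ((cs[j := DCC d (es ! j) (cs ! j)])
          [j := DCC d (es ! j) (cs ! j) + u_mult (DCC Dl (es ! j) (cs ! j))])"
    by (simp add: dCC_eq)
  also have "\<dots> = Phi Ac n q \<phi> (es[j := es ! j + 1]) (cs[j := DCC d (es ! j) (cs ! j)])
      + Phi Ac n q \<phi> (es[j := es ! j + 1]) (cs[j := u_mult (DCC Dl (es ! j) (cs ! j))])"
    using Phi_add_input[OF \<phi> cs' j] j dc Dc cs by (simp add: indom_def)
  also have "Phi Ac n q \<phi> (es[j := es ! j + 1]) (cs[j := u_mult (DCC Dl (es ! j) (cs ! j))])
      = u_mult (Phi Ac n q \<phi> (es[j := es ! j - 1]) (cs[j := DCC Dl (es ! j) (cs ! j)]))"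
    using Phi_u_mult_input[OF \<phi> cs j DCC_in_CCc[OF additive_map_of_degree_Dl c]]
    by (simp add: algebra_simps)
  finally show ?thesis .
qed

lemma ebracket_dCC:
  assumes \<phi>: "\<phi> \<in> CCE sc Ac n q" and cs: "indom (CCc Ac) n es cs"
  defines "F \<equiv> Phi Ac n q \<phi>"
  shows "ebracket (CCc Ac) (dCC d Dl) 1 n q F es cs
       = ebracket (CCc Ac) (DCC d) 1 n q F es cs + u_mult (ebracket (CCc Ac) (DCC Dl) (- 1) n q F es cs)"
proof -
  define A where "A = (\<lambda>j. F (es[j := es ! j + 1]) (cs[j := DCC d (es ! j) (cs ! j)]))"
  define B where "B = (\<lambda>j. F (es[j := es ! j - 1]) (cs[j := DCC Dl (es ! j) (cs ! j)]))"
  have "ebracket (CCc Ac) (DCC d) 1 n q F es cs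
      = DCC d (sum_list es + q) (F es cs) - sgnmul q (\<Sum>j<n. sgnmul (sum_list (take j es)) (A j))"
    "ebracket (CCc Ac) (DCC Dl) (- 1) n q F es cs
      = DCC Dl (sum_list es + q) (F es cs) - sgnmul q (\<Sum>j<n. sgnmul (sum_list (take j es)) (B j))"
    using cs by (simp_all add: ebracket_def A_def B_def sgnmul_uminus)
  moreover have "ebracket (CCc Ac) (dCC d Dl) 1 n q F es cs
      = DCC d (sum_list es + q) (F es cs) + u_mult (DCC Dl (sum_list es + q) (F es cs))
        - sgnmul q (\<Sum>j<n. sgnmul (sum_list (take j es)) (A j + u_mult (B j)))"
  proof -
    have "(\<Sum>j<n. sgnmul (sum_list (take j es)) (F (es[j := es ! j + 1]) (cs[j := dCC d Dl (es ! j) (cs ! j)])))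
        = (\<Sum>j<n. sgnmul (sum_list (take j es)) (A j + u_mult (B j)))"
      by (rule sum.cong) (simp_all add: A_def B_def F_def Phi_dCC_input[OF \<phi> cs])
    then show ?thesis
      using cs by (simp add: ebracket_def dCC_eq[of "sum_list es + q"])
  qed
  ultimately show ?thesis
    by (simp add: u_mult_diff u_mult_sgnmul u_mult_sum sgnmul_add sgnmul_diff sum.distrib)
qed

lemma Phi_dCCE:
  assumes \<phi>: "\<phi> \<in> CCE sc Ac n q"
  shows "Phi Ac n (q + 1) (dCCE Ac d Dl n q \<phi>) = ebracket (CCc Ac) (dCC d Dl) 1 n q (Phi Ac n q \<phi>)"
proof (rule ext, rule ext)
  fix es cs
  have "dCCE Ac d Dl n q \<phi> = (\<lambda>r. ebracket Ac d 1 n (q - 2 * int r) (\<phi> r))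
      + (\<lambda>r. if r = 0 then 0 else DCCE Ac Dl n q \<phi> (r - 1))"
    by (rule ext, rename_tac r, case_tac r) (simp_all add: dCCE_def DCCE_def algebra_simps)
  then have "Phi Ac n (q + 1) (dCCE Ac d Dl n q \<phi>) es cs
      = ebracket (CCc Ac) (DCC d) 1 n q (Phi Ac n q \<phi>) es cs
        + u_mult (ebracket (CCc Ac) (DCC Dl) (- 1) n q (Phi Ac n q \<phi>) es cs)"
    by (simp add: Phi_add Phi_ebracket[OF \<phi> additive_map_of_degree_d]
        Phi_u_mult_components[where q="q - 1"] Phi_DCCE[OF \<phi>])
  moreover have "ebracket (CCc Ac) (dCC d Dl) 1 n q (Phi Ac n q \<phi>) es cs
      = ebracket (CCc Ac) (DCC d) 1 n q (Phi Ac n q \<phi>) es cs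
        + u_mult (ebracket (CCc Ac) (DCC Dl) (- 1) n q (Phi Ac n q \<phi>) es cs)"
  proof (cases "indom (CCc Ac) n es cs")
    case True
    then show ?thesis by (rule ebracket_dCC[OF \<phi>])
  qed (simp add: ebracket_def u_mult_def fun_eq_iff)
  ultimately show "Phi Ac n (q + 1) (dCCE Ac d Dl n q \<phi>) es cs
      = ebracket (CCc Ac) (dCC d Dl) 1 n q (Phi Ac n q \<phi>) es cs"
    by simp
qed

lemma Phi_actCCE:
  assumes \<sigma>: "\<sigma> permutes {..<n}"
  shows "Phi Ac n q (actCCE Ac n \<sigma> \<phi>) = actEnd (CCc Ac) n \<sigma> (Phi Ac n q \<phi>)"
proof (intro ext)
  fix es cs N
  show "Phi Ac n q (actCCE Ac n \<sigma> \<phi>) es cs N = actEnd (CCc Ac) n \<sigma> (Phi Ac n q \<phi>) es cs N"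
  proof (cases "indom (CCc Ac) n es cs")
    case False
    then show ?thesis by (simp add: Phi_outside actEnd_def)
  next
    case cs: True
    have len: "length es = n" "length cs = n"
      using cs by (auto simp: indom_def)
    have \<sigma>_len: "\<sigma> permutes {..<length es}" "\<sigma> permutes {..<length cs}"
      using \<sigma> len by simp_all
    moreover have "\<sigma> j < n" if "j < n" for j
      using permutes_in_image[OF \<sigma>] that by simp
    ultimately have cs\<sigma>: "indom (CCc Ac) n (permute_list \<sigma> es) (permute_list \<sigma> cs)"
      using cs len by (simp add: indom_def permute_list_nth)
    have "Phi Ac n q (actCCE Ac n \<sigma> \<phi>) es cs N
        = (\<Sum>(r, ii)\<in>u_splits n N. sgnmul (koszul \<sigma> es n)
            (\<phi> r (permute_list \<sigma> (shift_degs es ii)) (permute_list \<sigma> (coeffs_at cs ii))))"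
      unfolding Phi_eq[OF cs]
      using indom_shift_degs[OF cs] even_koszul_shift_degs[OF \<sigma> len(1)]
      by (intro sum.cong) (auto simp: actCCE_def actEnd_eq cong: sgnmul_cong)
    also have "\<dots> = (\<Sum>(r, ii)\<in>u_splits n N. sgnmul (koszul \<sigma> es n)
            (\<phi> r (shift_degs (permute_list \<sigma> es) (permute_list \<sigma> ii))
                 (coeffs_at (permute_list \<sigma> cs) (permute_list \<sigma> ii))))"
      using \<sigma>_len len
      by (intro sum.cong) (auto simp: permute_list_shift_degs permute_list_coeffs_at)
    also have "\<dots> = (\<Sum>(r, ii)\<in>u_splits n N. sgnmul (koszul \<sigma> es n)
            (\<phi> r (shift_degs (permute_list \<sigma> es) ii) (coeffs_at (permute_list \<sigma> cs) ii)))"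
      by (rule sum_u_splits_permute[OF \<sigma>])
    also have "\<dots> = sgnmul (koszul \<sigma> es n) (Phi Ac n q \<phi> (permute_list \<sigma> es) (permute_list \<sigma> cs) N)"
      by (simp add: Phi_eq[OF cs\<sigma>] sgnmul_sum split_beta)
    finally show ?thesis
      using cs by (simp add: actEnd_eq sgnmul_apply)
  qed
qed

lemma Phi_expand_input:
  assumes \<phi>: "\<phi> \<in> CCE sc Ac n q" and \<psi>: "\<psi> \<in> CCE sc Ac m q'" and j: "j < n"
    and cs: "indom (CCc Ac) n es cs" and csm: "indom (CCc Ac) m esm csm"
    and es_j: "es ! j = sum_list esm + q'" and cs_j: "cs ! j = Phi Ac m q' \<psi> esm csm"
  shows "Phi Ac n q \<phi> es cs N = (\<Sum>(s, ii)\<in>u_splits n N. \<Sum>(t, ks)\<in>u_splits m (ii ! j).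
           \<phi> s (shift_degs es ii) ((coeffs_at cs ii)[j := \<psi> t (shift_degs esm ks) (coeffs_at csm ks)]))"
  unfolding Phi_eq[OF cs]
proof (intro sum.cong refl, clarify)
  fix s ii assume ii: "(s, ii) \<in> u_splits n N"
  let ?x = "\<lambda>(t, ks). \<psi> t (shift_degs esm ks) (coeffs_at csm ks)"
  have cs_ii_j: "coeffs_at cs ii ! j = sum ?x (u_splits m (ii ! j))"
    using ii j cs cs_j by (simp add: nth_coeffs_at indom_def Phi_eq[OF csm])
  have "shift_degs es ii ! j = sum_list esm + q' - 2 * int (ii ! j)"
    using ii j cs es_j by (simp add: nth_shift_degs indom_def)
  then have "?x p \<in> Ac (shift_degs es ii ! j)" if "p \<in> u_splits m (ii ! j)" for p
    using Phi_term_in[OF \<psi> csm, of "fst p" "snd p" "ii ! j"] that by (simp add: split_beta)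
  then have "\<phi> s (shift_degs es ii) ((coeffs_at cs ii)[j := sum ?x (u_splits m (ii ! j))])
      = (\<Sum>p\<in>u_splits m (ii ! j). \<phi> s (shift_degs es ii) ((coeffs_at cs ii)[j := ?x p]))"
    using ii by (intro EndS_sum[OF CCE_coeff[OF \<phi>] indom_shift_degs[OF cs] j finite_u_splits]) auto
  then show "\<phi> s (shift_degs es ii) (coeffs_at cs ii)
      = (\<Sum>(t, ks)\<in>u_splits m (ii ! j). \<phi> s (shift_degs es ii) ((coeffs_at cs ii)[j := \<psi> t (shift_degs esm ks) (coeffs_at csm ks)]))"
    unfolding cs_ii_j[symmetric] list_update_id by (simp add: split_beta)
qed

lemma Phi_compCCE:
  assumes j: "j < n" and \<phi>: "\<phi> \<in> CCE sc Ac n q" and \<psi>: "\<psi> \<in> CCE sc Ac m q'"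
  shows "Phi Ac (n + m - 1) (q + q') (compCCE Ac n m q' j \<phi> \<psi>)
       = compEnd (CCc Ac) n m q' j (Phi Ac n q \<phi>) (Phi Ac m q' \<psi>)"
proof (intro ext)
  fix es cs N
  show "Phi Ac (n + m - 1) (q + q') (compCCE Ac n m q' j \<phi> \<psi>) es cs N
      = compEnd (CCc Ac) n m q' j (Phi Ac n q \<phi>) (Phi Ac m q' \<psi>) es cs N"
  proof (cases "indom (CCc Ac) (n + m - 1) es cs")
    case False
    then show ?thesis by (simp add: Phi_outside compEnd_def)
  next
    case cs: True
    have len: "length es = n + m - 1" "length cs = n + m - 1"
      using cs by (auto simp: indom_def)
    define esm where "esm = take m (drop j es)"
    define csm where "csm = take m (drop j cs)"
    define X where "X = Phi Ac m q' \<psi> esm csm"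
    define es1 where "es1 = take j es @ [sum_list esm + q'] @ drop (j + m) es"
    define cs1 where "cs1 = take j cs @ [X] @ drop (j + m) cs"
    define sign :: "'a \<Rightarrow> 'a" where "sign = sgnmul (q' * sum_list (take j es))"
    have es1_j: "es1 ! j = sum_list esm + q'" and cs1_j: "cs1 ! j = X"
      using len j by (auto simp: es1_def cs1_def nth_append)
    have csm: "indom (CCc Ac) m esm csm"
      using cs j by (auto simp: indom_def esm_def csm_def)
    have "X \<in> CCc Ac (sum_list esm + q')"
      using Phi_EndS[OF \<psi>] csm unfolding X_def EndS_def by blast
    then have cs1: "indom (CCc Ac) n es1 cs1"
      unfolding es1_def cs1_def by (rule indom_splice[OF cs j])
    have "Phi Ac (n + m - 1) (q + q') (compCCE Ac n m q' j \<phi> \<psi>) es cs N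
        = (\<Sum>(r, ls)\<in>u_splits (n + m - 1) N. \<Sum>s\<le>r. sign
            (\<phi> s (shift_degs es1 (take j ls @ [r - s + sum_list (take m (drop j ls))] @ drop (j + m) ls))
              ((coeffs_at cs1 (take j ls @ [r - s + sum_list (take m (drop j ls))] @ drop (j + m) ls))
                [j := \<psi> (r - s) (shift_degs esm (take m (drop j ls))) (coeffs_at csm (take m (drop j ls)))])))"
      unfolding Phi_eq[OF cs] compCCE_def sum_fun_apply sign_def es1_def cs1_def esm_def csm_def
      by (intro sum.cong refl, clarify, intro sum.cong refl, rule compEnd_at_shift_degs[OF cs _ j]) simp
    also have "\<dots> = (\<Sum>(s, ii)\<in>u_splits n N. \<Sum>(t, ks)\<in>u_splits m (ii ! j). sign
        (\<phi> s (shift_degs es1 ii) ((coeffs_at cs1 ii)[j := \<psi> t (shift_degs esm ks) (coeffs_at csm ks)])))"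
      by (rule sum_u_splits_splice[OF j, where g="\<lambda>s ii t ks. sign
        (\<phi> s (shift_degs es1 ii) ((coeffs_at cs1 ii)[j := \<psi> t (shift_degs esm ks) (coeffs_at csm ks)]))"])
    also have "\<dots> = sign (\<Sum>(s, ii)\<in>u_splits n N. \<Sum>(t, ks)\<in>u_splits m (ii ! j).
        \<phi> s (shift_degs es1 ii) ((coeffs_at cs1 ii)[j := \<psi> t (shift_degs esm ks) (coeffs_at csm ks)]))"
      by (simp add: sign_def sgnmul_sum split_beta)
    also have "\<dots> = sign (Phi Ac n q \<phi> es1 cs1 N)"
      by (simp add: Phi_expand_input[OF \<phi> \<psi> j cs1 csm es1_j cs1_j[unfolded X_def]])
    also have "\<dots> = compEnd (CCc Ac) n m q' j (Phi Ac n q \<phi>) (Phi Ac m q' \<psi>) es cs N"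
      using cs by (simp add: compEnd_def sign_def sgnmul_apply es1_def cs1_def X_def esm_def csm_def)
    finally show ?thesis .
  qed
qed

end

theorem mainTheorem10:
  fixes sc :: "'k::field \<Rightarrow> 'a::ab_group_add \<Rightarrow> 'a"
    and Ac :: "int \<Rightarrow> 'a set"
    and d Dl :: "int \<Rightarrow> 'a \<Rightarrow> 'a"
  assumes "mixed_cx sc Ac d Dl"
  shows
    \<comment> \<open>well defined: degree q goes to degree q\<close>
    "(\<forall>n q \<phi>. \<phi> \<in> CCE sc Ac n q \<longrightarrow> Phi Ac n q \<phi> \<in> EndS (scc sc) (CCc Ac) n q)
   \<comment> \<open>k-linear\<close>
   \<and> (\<forall>n q \<phi> \<psi> c. \<phi> \<in> CCE sc Ac n q \<and> \<psi> \<in> CCE sc Ac n q \<longrightarrow>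
        Phi Ac n q (\<phi> + \<psi>) = Phi Ac n q \<phi> + Phi Ac n q \<psi> \<and>
        Phi Ac n q (\<lambda>r. fscale sc c (\<phi> r)) = fscale (scc sc) c (Phi Ac n q \<phi>))
   \<comment> \<open>injective\<close>
   \<and> (\<forall>n q. inj_on (Phi Ac n q) (CCE sc Ac n q))
   \<comment> \<open>compatible with the differentials\<close>
   \<and> (\<forall>n q \<phi>. \<phi> \<in> CCE sc Ac n q \<longrightarrow>
        Phi Ac n (q + 1) (dCCE Ac d Dl n q \<phi>)
          = ebracket (CCc Ac) (dCC d Dl) 1 n q (Phi Ac n q \<phi>))
   \<comment> \<open>compatible with the operators \<Delta>\<close>
   \<and> (\<forall>n q \<phi>. \<phi> \<in> CCE sc Ac n q \<longrightarrow>
        Phi Ac n (q - 1) (DCCE Ac Dl n q \<phi>)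
          = ebracket (CCc Ac) (DCC Dl) (-1) n q (Phi Ac n q \<phi>))
   \<comment> \<open>compatible with partial compositions\<close>
   \<and> (\<forall>n m q q' j \<phi> \<psi>. j < n \<and> \<phi> \<in> CCE sc Ac n q \<and> \<psi> \<in> CCE sc Ac m q' \<longrightarrow>
        Phi Ac (n + m - 1) (q + q') (compCCE Ac n m q' j \<phi> \<psi>)
          = compEnd (CCc Ac) n m q' j (Phi Ac n q \<phi>) (Phi Ac m q' \<psi>))
   \<comment> \<open>compatible with the symmetric group actions\<close>
   \<and> (\<forall>n q \<sigma> \<phi>. \<sigma> permutes {..<n} \<and> \<phi> \<in> CCE sc Ac n q \<longrightarrow>
        Phi Ac n q (actCCE Ac n \<sigma> \<phi>) = actEnd (CCc Ac) n \<sigma> (Phi Ac n q \<phi>))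
   \<comment> \<open>preserves the unit\<close>
   \<and> Phi Ac 1 0 (unitCCE Ac) = unitEnd (CCc Ac)"
proof -
  interpret mixed_complex sc Ac d Dl
    by (rule mixed_complex.intro) (rule assms)
  show ?thesis
    using Phi_compCCE Phi_unit
    by (auto simp: Phi_EndS Phi_add Phi_fscale Phi_inj_on Phi_dCCE Phi_DCCE Phi_actCCE)
qed

end
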